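(* For every target rate $r>0$, relay power $P_{\rm r}>0$ and $\mathcal C_x\in[0,1)$, the outage probability of the S–R link is \[ \mathcal P_{\rm sr}(P_{\rm r},\mathcal C_x)=1-\frac{1}{\Gamma(m_{\rm rr})\Gamma(m_{\rm sr})\theta_{\rm rr}^{m_{\rm rr}}}\int_0^\infty x^{m_{\rm rr}-1}\,\Gamma\!\left(m_{\rm sr},\frac{P_{\rm r}x+1}{P_{\rm s}\theta_{\rm sr}}\Psi_r\!\left(\frac{P_{\rm r}x\,\mathcal C_x}{P_{\rm r}x+1}\right)\right)e^{-x/\theta_{\rm rr}}\,dx . \]
   Context: Let $P_{\rm s}>0$, $P_{\rm r}>0$ be the source and relay transmit powers. For links $ij\in\{\mathrm{sr},\mathrm{rr},\mathrm{rd},\mathrm{sd}\}$ let $g_{ij}$ be mutually independent random channel gains, $g_{ij}$ gamma distributed with integer shape parameter $m_{ij}\ge1$ and scale $\theta_{ij}=\pi_{ij}/m_{ij}$, where $\pi_{ij}=\mathbb E[g_{ij}]>0$; i.e. $g_{ij}$ has density $x^{m_{ij}-1}e^{-x/\theta_{ij}}/(\Gamma(m_{ij})\theta_{ij}^{m_{ij}})$ for $x\ge0$. For a circularity coefficient $\mathcal C_x\in[0,1)$ define $R_{\rm sr}(P_{\rm r},\mathcal C_x)=\tfrac12\log_2\frac{(P_{\rm s}g_{\rm sr}+P_{\rm r}g_{\rm rr}+1)^2-(P_{\rm r}g_{\rm rr}\mathcal C_x)^2}{(P_{\rm r}g_{\rm rr}+1)^2-(P_{\rm r}g_{\rm rr}\mathcal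 C_x)^2}$ and $R_{\rm rd}(P_{\rm r},\mathcal C_x)=\tfrac12\log_2\frac{(P_{\rm r}g_{\rm rd}+P_{\rm s}g_{\rm sd}+1)^2-(P_{\rm r}g_{\rm rd}\mathcal C_x)^2}{(P_{\rm s}g_{\rm sd}+1)^2}$. For a target rate $r>0$ put $\gamma=2^{2r}-1$, $\eta=2^r-1$ and $\Psi_r(x)=\sqrt{1+\gamma(1-x^2)}-1$. The outage probabilities are $\mathcal P_{\rm sr}=\mathbb P\{R_{\rm sr}<r\}$, $\mathcal P_{\rm rd}=\mathbb P\{R_{\rm rd}<r\}$ and $\mathcal P_{\rm E-E}=\mathbb P\{\min(R_{\rm sr},R_{\rm rd})<r\}$. $\Gamma(a,x)=\int_x^\infty t^{a-1}e^{-t}dt$ is the upper incomplete gamma function. *)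

theory Defs
  imports "HOL-Probability.Probability"
begin

definition gamma_density :: "nat \<Rightarrow> real \<Rightarrow> real \<Rightarrow> real" where
  "gamma_density m \<theta> x =
     (if x < 0 then 0 else x ^ (m - 1) * exp (- x / \<theta>) / (Gamma (real m) * \<theta> ^ m))"

definition upper_inc_Gamma :: "nat \<Rightarrow> real \<Rightarrow> real" where
  "upper_inc_Gamma a x = (LBINT t:{x..}. t ^ (a - 1) * exp (- t))"

definition gam_r :: "real \<Rightarrow> real" where
  "gam_r r = 2 powr (2 * r) - 1"

definition Psi :: "real \<Rightarrow> real \<Rightarrow> real" where
  "Psi r x = sqrt (1 + gam_r r * (1 - x\<^sup>2)) - 1"

definition R_sr :: "real \<Rightarrow> real \<Rightarrow> real \<Rightarrow> real \<Rightarrow> real \<Rightarrow> real" where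
  "R_sr Ps Pr Cx gsr grr =
     1/2 * log 2 (((Ps * gsr + Pr * grr + 1)\<^sup>2 - (Pr * grr * Cx)\<^sup>2) /
                  ((Pr * grr + 1)\<^sup>2 - (Pr * grr * Cx)\<^sup>2))"

end

theory Submission
  imports Defs
begin

text \<open>
  Solving the quadratic inequality behind \<open>R_sr < r\<close> for \<open>P_s g_sr\<close> shows that, for a fixed
  loop gain \<open>g_rr = x \<ge> 0\<close>, the link is in outage exactly when
  \<open>g_sr < T(x) = (P_r x + 1) / P_s \<cdot> \<Psi>_r (P_r x C_x / (P_r x + 1))\<close>.
  By independence the complementary probability is the average over \<open>g_rr\<close> of the gamma tail
  \<open>P{g_sr \<ge> T(x)}\<close>, and the substitution \<open>u = \<theta>_sr s\<close> turns that tail into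
  \<open>\<Gamma>(m_sr, T(x)/\<theta>_sr) / \<Gamma>(m_sr)\<close>.
\<close>

lemma measure_pair_measure_eq_integral:
  assumes "prob_space N1" and "prob_space N2" and B: "B \<in> sets (N1 \<Otimes>\<^sub>M N2)"
  shows "measure (N1 \<Otimes>\<^sub>M N2) B = (\<integral>x. measure N2 (Pair x -` B) \<partial>N1)"
proof -
  interpret N1: prob_space N1 by fact
  interpret N2: prob_space N2 by fact
  have slice_measurable: "(\<lambda>x. measure N2 (Pair x -` B)) \<in> borel_measurable N1"
    using N2.measurable_emeasure_Pair[OF B] unfolding measure_def by measurable
  have "emeasure (N1 \<Otimes>\<^sub>M N2) B = (\<integral>\<^sup>+x. ennreal (measure N2 (Pair x -` B)) \<partial>N1)"
    using B by (simp add: N2.emeasure_pair_measure_alt N2.emeasure_eq_measure)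
  also have "\<dots> = ennreal (\<integral>x. measure N2 (Pair x -` B) \<partial>N1)"
    using slice_measurable
    by (intro nn_integral_eq_integral N1.integrable_const_bound[where B=1]) auto
  finally show ?thesis
    by (simp add: measure_def)
qed

lemma (in prob_space) indep_var_of_indep_vars:
  assumes "indep_vars M' X I" and "i \<in> I" and "j \<in> I" and "i \<noteq> j"
  shows "indep_var (M' i) (X i) (M' j) (X j)"
proof -
  have "indep_var (M' i) ((\<lambda>f. f i) \<circ> (\<lambda>\<omega>. restrict (\<lambda>k. X k \<omega>) {i}))
      (M' j) ((\<lambda>f. f j) \<circ> (\<lambda>\<omega>. restrict (\<lambda>k. X k \<omega>) {j}))"
    using assms by (intro indep_var_compose[OF indep_var_restrict[OF assms(1)]]) auto
  then show ?thesis
    by (simp add: comp_def)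
qed

lemma (in prob_space) prob_indep_var_pair_eq_integral:
  assumes indep: "indep_var S X T Y" and B: "B \<in> sets (S \<Otimes>\<^sub>M T)"
  shows "prob {\<omega> \<in> space M. (X \<omega>, Y \<omega>) \<in> B} = (\<integral>x. measure (distr M T Y) (Pair x -` B) \<partial>distr M S X)"
proof -
  have X: "random_variable S X" and Y: "random_variable T Y"
    and joint: "distr M S X \<Otimes>\<^sub>M distr M T Y = distr M (S \<Otimes>\<^sub>M T) (\<lambda>\<omega>. (X \<omega>, Y \<omega>))"
    using indep unfolding indep_var_distribution_eq by auto
  have "prob {\<omega> \<in> space M. (X \<omega>, Y \<omega>) \<in> B} = measure (distr M S X \<Otimes>\<^sub>M distr M T Y) B"
    unfolding joint using X Y B by (subst measure_distr) (auto intro!: arg_cong[where f=prob])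
  also have "\<dots> = (\<integral>x. measure (distr M T Y) (Pair x -` B) \<partial>distr M S X)"
    using X Y B by (intro measure_pair_measure_eq_integral prob_space_distr) auto
  finally show ?thesis .
qed

lemma gamma_density_nonneg: "\<theta> > 0 \<Longrightarrow> gamma_density m \<theta> x \<ge> 0"
  by (cases m) (simp_all add: gamma_density_def Gamma_real_pos)

lemma gamma_density_measurable [measurable]: "gamma_density m \<theta> \<in> borel_measurable borel"
  unfolding gamma_density_def[abs_def] by measurable

lemma gamma_density_scale:
  assumes "m \<ge> 1" and "\<theta> > 0" and "s \<ge> 0"
  shows "\<theta> * gamma_density m \<theta> (\<theta> * s) = s ^ (m - 1) * exp (- s) / Gamma (real m)"
proof -
  have "\<not> \<theta> * s < 0"
    using assms by (simp add: not_less)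
  then show ?thesis
    using assms Gamma_real_pos[of "real m"]
    by (cases m) (simp_all add: gamma_density_def power_mult_distrib field_simps)
qed

lemma gamma_density_eq_erlang_density:
  assumes "m \<ge> 1" and "\<theta> > 0"
  shows "gamma_density m \<theta> = erlang_density (m - 1) (1 / \<theta>)"
proof
  fix x
  obtain k where k: "m = Suc k"
    using assms(1) by (cases m) auto
  have "Gamma (real m) = fact k"
    using Gamma_fact[of k] by (simp add: k add.commute)
  then show "gamma_density m \<theta> x = erlang_density (m - 1) (1 / \<theta>) x"
    using assms(2) by (simp add: gamma_density_def erlang_density_def k power_one_over field_simps)
qed

definition gamma_measure :: "nat \<Rightarrow> real \<Rightarrow> real measure" where
  "gamma_measure m \<theta> = density lborel (\<lambda>x. ennreal (gamma_density m \<theta> x))"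

lemma prob_space_gamma_measure: "m \<ge> 1 \<Longrightarrow> \<theta> > 0 \<Longrightarrow> prob_space (gamma_measure m \<theta>)"
  by (simp add: gamma_measure_def gamma_density_eq_erlang_density prob_space_erlang_density)

lemma sets_gamma_measure [measurable_cong, simp]: "sets (gamma_measure m \<theta>) = sets borel"
  by (simp add: gamma_measure_def)

lemma AE_gamma_measure_nonneg: "AE x in gamma_measure m \<theta>. 0 \<le> x"
  unfolding gamma_measure_def
  by (subst AE_density) (auto intro!: AE_I2 simp: gamma_density_def not_le)

lemma integrable_power_mult_exp_atLeast:
  fixes y :: real
  assumes "y \<ge> 0"
  shows "integrable lborel (\<lambda>s. indicator {y..} s * (s ^ k * exp (- s)))"
proof (rule integrableI_nonneg)
  show "AE s in lborel. 0 \<le> indicator {y..} s * (s ^ k * exp (- s))"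
    using assms by (auto simp: indicator_def)
  have "(\<integral>\<^sup>+s. ennreal (indicator {y..} s * (s ^ k * exp (- s))) \<partial>lborel)
      \<le> (\<integral>\<^sup>+s. ennreal (s ^ k * exp (- s)) * indicator {0..} s \<partial>lborel)"
    using assms by (intro nn_integral_mono) (auto simp: indicator_def)
  also have "\<dots> = real_of_nat (fact k)"
    by (rule nn_intergal_power_times_exp_Ici)
  finally show "(\<integral>\<^sup>+s. ennreal (indicator {y..} s * (s ^ k * exp (- s))) \<partial>lborel) < \<infinity>"
    by (simp add: le_less_trans)
qed simp

lemma upper_inc_Gamma_nonneg: "x \<ge> 0 \<Longrightarrow> upper_inc_Gamma a x \<ge> 0"
  unfolding upper_inc_Gamma_def set_lebesgue_integral_def
  by (intro integral_nonneg_AE AE_I2) (auto simp: indicator_def)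

lemma emeasure_gamma_measure_atLeast:
  assumes m: "m \<ge> 1" and \<theta>: "\<theta> > 0" and T: "T \<ge> 0"
  shows "emeasure (gamma_measure m \<theta>) {T..} = ennreal (upper_inc_Gamma m (T / \<theta>) / Gamma (real m))"
proof -
  have scaled: "\<bar>\<theta>\<bar> * (ennreal (gamma_density m \<theta> (\<theta> * s)) * indicator {T..} (\<theta> * s))
      = ennreal (indicator {T / \<theta>..} s * (s ^ (m - 1) * exp (- s)) / Gamma (real m))" for s
  proof (cases "T \<le> \<theta> * s")
    case True
    then have "0 \<le> \<theta> * s" and in_tail: "T / \<theta> \<le> s"
      using T \<theta> by (auto simp: divide_le_eq mult.commute)
    then have "s \<ge> 0"
      using \<theta> by (simp add: zero_le_mult_iff)
    then show ?thesis
      using True in_tail \<theta> m gamma_density_scale[OF m \<theta>, of s] gamma_density_nonneg[OF \<theta>]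
      by (simp add: ennreal_mult[symmetric])
  next
    case False
    then have "\<not> T / \<theta> \<le> s"
      using \<theta> by (simp add: divide_le_eq mult.commute)
    then show ?thesis
      using False by simp
  qed
  have "emeasure (gamma_measure m \<theta>) {T..} = (\<integral>\<^sup>+u. ennreal (gamma_density m \<theta> u) * indicator {T..} u \<partial>lborel)"
    by (simp add: gamma_measure_def emeasure_density)
  also have "\<dots> = \<bar>\<theta>\<bar> * (\<integral>\<^sup>+s. ennreal (gamma_density m \<theta> (0 + \<theta> * s)) * indicator {T..} (0 + \<theta> * s) \<partial>lborel)"
    using \<theta> by (intro nn_integral_real_affine) auto
  also have "\<dots> = (\<integral>\<^sup>+s. ennreal (indicator {T / \<theta>..} s * (s ^ (m - 1) * exp (- s)) / Gamma (real m)) \<partial>lborel)"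
    by (simp add: nn_integral_cmult[symmetric] scaled)
  also have "\<dots> = ennreal (\<integral>s. indicator {T / \<theta>..} s * (s ^ (m - 1) * exp (- s)) / Gamma (real m) \<partial>lborel)"
  proof (intro nn_integral_eq_integral integrable_divide integrable_power_mult_exp_atLeast AE_I2)
    have "T / \<theta> \<ge> 0" and "Gamma (real m) > 0"
      using T \<theta> m by (simp_all add: Gamma_real_pos)
    then show "0 \<le> indicator {T / \<theta>..} s * (s ^ (m - 1) * exp (- s)) / Gamma (real m)" for s
      by (cases "T / \<theta> \<le> s") (simp_all add: indicator_def)
  qed (use T \<theta> in simp)
  also have "\<dots> = ennreal (upper_inc_Gamma m (T / \<theta>) / Gamma (real m))"
    by (simp add: upper_inc_Gamma_def set_lebesgue_integral_def)
  finally show ?thesis .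
qed

lemma Psi_nonneg:
  assumes "r > 0" and "0 \<le> x" and "x \<le> 1"
  shows "Psi r x \<ge> 0"
proof -
  have "gam_r r \<ge> 0"
    using assms by (simp add: gam_r_def ge_one_powr_ge_zero)
  moreover have "x\<^sup>2 \<le> 1"
    using assms power_le_one[of x 2] by simp
  ultimately show ?thesis
    by (simp add: Psi_def)
qed

lemma square_less_Psi_threshold_iff:
  fixes a C r y :: real
  assumes "a \<ge> 0" and "0 \<le> C" and "C < 1" and "y \<ge> 0"
  shows "y\<^sup>2 - (a * C)\<^sup>2 < 2 powr (2 * r) * ((a + 1)\<^sup>2 - (a * C)\<^sup>2)
    \<longleftrightarrow> y < (a + 1) * (1 + Psi r (a * C / (a + 1)))"
proof -
  define x where "x = a * C / (a + 1)"
  define W where "W = 1 + gam_r r * (1 - x\<^sup>2)"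
  have x: "0 \<le> x" "x < 1"
    using assms mult_left_le[of C a] by (auto simp: x_def divide_simps)
  have "x\<^sup>2 \<le> 1 + gam_r r * (1 - x\<^sup>2)"
    using x power_le_one[of x 2] mult_right_mono[of "-1" "gam_r r" "1 - x\<^sup>2"]
    by (simp add: gam_r_def)
  then have "W \<ge> 0"
    unfolding W_def using zero_le_power2[of x] by linarith
  have "(a + 1)\<^sup>2 * W = 2 powr (2 * r) * ((a + 1)\<^sup>2 - (a * C)\<^sup>2) + (a * C)\<^sup>2"
    using assms by (simp add: W_def x_def gam_r_def power_divide field_simps)
  then have "y\<^sup>2 - (a * C)\<^sup>2 < 2 powr (2 * r) * ((a + 1)\<^sup>2 - (a * C)\<^sup>2) \<longleftrightarrow> y\<^sup>2 < (a + 1)\<^sup>2 * W"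
    by linarith
  also have "\<dots> \<longleftrightarrow> sqrt (y\<^sup>2) < sqrt ((a + 1)\<^sup>2 * W)"
    by (rule real_sqrt_less_iff[symmetric])
  also have "\<dots> \<longleftrightarrow> y < (a + 1) * sqrt W"
    using assms by (simp add: real_sqrt_mult)
  finally show ?thesis
    by (simp add: Psi_def W_def x_def)
qed

lemma R_sr_less_iff:
  assumes "Ps > 0" and "Pr \<ge> 0" and "0 \<le> Cx" and "Cx < 1" and "gsr \<ge> 0" and "grr \<ge> 0"
  shows "R_sr Ps Pr Cx gsr grr < r
    \<longleftrightarrow> gsr < (Pr * grr + 1) / Ps * Psi r (Pr * grr * Cx / (Pr * grr + 1))"
proof -
  define a where "a = Pr * grr"
  define s where "s = Ps * gsr"
  have "a \<ge> 0" and "s \<ge> 0"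
    using assms by (simp_all add: a_def s_def)
  have "a * Cx < a + 1" and "0 \<le> a * Cx"
    using \<open>a \<ge> 0\<close> assms mult_left_le[of Cx a] by simp_all
  then have "(a * Cx)\<^sup>2 < (a + 1)\<^sup>2" and "(a * Cx)\<^sup>2 < (s + a + 1)\<^sup>2"
    using \<open>s \<ge> 0\<close> power_strict_mono[of "a * Cx" _ 2] by simp_all
  then have D: "(a + 1)\<^sup>2 - (a * Cx)\<^sup>2 > 0" and N: "(s + a + 1)\<^sup>2 - (a * Cx)\<^sup>2 > 0"
    by simp_all
  have "R_sr Ps Pr Cx gsr grr < r
      \<longleftrightarrow> log 2 (((s + a + 1)\<^sup>2 - (a * Cx)\<^sup>2) / ((a + 1)\<^sup>2 - (a * Cx)\<^sup>2)) < 2 * r"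
    by (auto simp: R_sr_def a_def s_def)
  also have "\<dots> \<longleftrightarrow> (s + a + 1)\<^sup>2 - (a * Cx)\<^sup>2 < 2 powr (2 * r) * ((a + 1)\<^sup>2 - (a * Cx)\<^sup>2)"
    using N D by (simp add: log_less_iff pos_divide_less_eq)
  also have "\<dots> \<longleftrightarrow> s < (a + 1) * Psi r (a * Cx / (a + 1))"
    using \<open>a \<ge> 0\<close> \<open>s \<ge> 0\<close> assms
    by (subst square_less_Psi_threshold_iff) (simp_all add: algebra_simps)
  also have "\<dots> \<longleftrightarrow> gsr < (Pr * grr + 1) / Ps * Psi r (Pr * grr * Cx / (Pr * grr + 1))"
    using assms by (simp add: a_def s_def field_simps)
  finally show ?thesis .
qed

lemma sets_R_sr_not_less:
  "{p :: real \<times> real. \<not> R_sr Ps Pr Cx (snd p) (fst p) < r} \<in> sets (borel \<Otimes>\<^sub>M borel)"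
proof -
  have "{p \<in> space (borel \<Otimes>\<^sub>M borel). \<not> R_sr Ps Pr Cx (snd p) (fst p) < r} \<in> sets (borel \<Otimes>\<^sub>M borel)"
    unfolding R_sr_def by measurable
  then show ?thesis
    by (simp add: space_pair_measure)
qed

lemma measure_gamma_measure_R_sr_not_less:
  assumes m: "m \<ge> 1" and \<theta>: "\<theta> > 0" and "Ps > 0" and "Pr \<ge> 0" and "r > 0"
    and "0 \<le> Cx" and "Cx < 1" and "grr \<ge> 0"
  shows "measure (gamma_measure m \<theta>) {gsr. \<not> R_sr Ps Pr Cx gsr grr < r}
    = upper_inc_Gamma m ((Pr * grr + 1) / (Ps * \<theta>) * Psi r (Pr * grr * Cx / (Pr * grr + 1)))
      / Gamma (real m)"
proof -
  define T where "T = (Pr * grr + 1) / Ps * Psi r (Pr * grr * Cx / (Pr * grr + 1))"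
  have "Pr * grr * Cx \<le> Pr * grr + 1"
    using assms mult_left_le[of Cx "Pr * grr"] by simp
  then have "Psi r (Pr * grr * Cx / (Pr * grr + 1)) \<ge> 0"
    using assms by (intro Psi_nonneg) (simp_all add: divide_le_eq_1_pos add_nonneg_pos)
  then have "T \<ge> 0"
    using assms by (simp add: T_def)
  have outage_iff: "R_sr Ps Pr Cx gsr grr < r \<longleftrightarrow> gsr < T" if "gsr \<ge> 0" for gsr
    unfolding T_def using assms that by (intro R_sr_less_iff) simp_all
  have "AE gsr in gamma_measure m \<theta>. gsr \<in> {gsr. \<not> R_sr Ps Pr Cx gsr grr < r} \<longleftrightarrow> gsr \<in> {T..}"
    using AE_gamma_measure_nonneg[of m \<theta>] by (rule AE_mp) (auto intro!: AE_I2 simp: outage_iff)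
  then have "emeasure (gamma_measure m \<theta>) {gsr. \<not> R_sr Ps Pr Cx gsr grr < r}
      = emeasure (gamma_measure m \<theta>) {T..}"
    by (rule emeasure_eq_AE) (auto simp: R_sr_def)
  also have "\<dots> = ennreal (upper_inc_Gamma m (T / \<theta>) / Gamma (real m))"
    using m \<theta> \<open>T \<ge> 0\<close> by (rule emeasure_gamma_measure_atLeast)
  moreover have "upper_inc_Gamma m (T / \<theta>) / Gamma (real m) \<ge> 0"
    using \<theta> \<open>T \<ge> 0\<close> m by (simp add: upper_inc_Gamma_nonneg Gamma_real_pos)
  ultimately have "measure (gamma_measure m \<theta>) {gsr. \<not> R_sr Ps Pr Cx gsr grr < r}
      = upper_inc_Gamma m (T / \<theta>) / Gamma (real m)"
    by (simp add: measure_def)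
  then show ?thesis
    by (simp add: T_def)
qed

lemma integral_gamma_measure_R_sr_not_less:
  assumes m: "m0 \<ge> 1" "m1 \<ge> 1" and \<theta>: "\<theta>0 > 0" "\<theta>1 > 0"
    and "Ps > 0" and "Pr \<ge> 0" and "r > 0" and "0 \<le> Cx" and "Cx < 1"
  shows "(\<integral>grr. measure (gamma_measure m0 \<theta>0) {gsr. \<not> R_sr Ps Pr Cx gsr grr < r} \<partial>gamma_measure m1 \<theta>1)
    = 1 / (Gamma (real m1) * Gamma (real m0) * \<theta>1 ^ m1) *
      (LBINT x:{0..}. x ^ (m1 - 1) *
         upper_inc_Gamma m0 ((Pr * x + 1) / (Ps * \<theta>0) * Psi r (Pr * x * Cx / (Pr * x + 1)))
         * exp (- x / \<theta>1))"
proof -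
  interpret G0: prob_space "gamma_measure m0 \<theta>0"
    using m(1) \<theta>(1) by (rule prob_space_gamma_measure)
  define B where "B = {p :: real \<times> real. \<not> R_sr Ps Pr Cx (snd p) (fst p) < r}"
  have "B \<in> sets (borel \<Otimes>\<^sub>M gamma_measure m0 \<theta>0)"
    using sets_R_sr_not_less by (simp add: B_def cong: sets_pair_measure_cong)
  from G0.measurable_emeasure_Pair[OF this]
  have measurable: "(\<lambda>grr. measure (gamma_measure m0 \<theta>0) {gsr. \<not> R_sr Ps Pr Cx gsr grr < r}) \<in> borel_measurable lborel"
    by (simp add: measure_def B_def vimage_def)
  have "(\<integral>grr. measure (gamma_measure m0 \<theta>0) {gsr. \<not> R_sr Ps Pr Cx gsr grr < r} \<partial>gamma_measure m1 \<theta>1)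
      = (\<integral>x. gamma_density m1 \<theta>1 x * measure (gamma_measure m0 \<theta>0) {gsr. \<not> R_sr Ps Pr Cx gsr x < r} \<partial>lborel)"
    unfolding gamma_measure_def[of m1] using measurable \<theta>
    by (subst integral_density) (auto intro: gamma_density_nonneg)
  also have "\<dots> = 1 / (Gamma (real m1) * Gamma (real m0) * \<theta>1 ^ m1) *
      (LBINT x:{0..}. x ^ (m1 - 1) *
         upper_inc_Gamma m0 ((Pr * x + 1) / (Ps * \<theta>0) * Psi r (Pr * x * Cx / (Pr * x + 1)))
         * exp (- x / \<theta>1))"
    unfolding set_lebesgue_integral_def integral_mult_right_zero[symmetric]
  proof (intro Bochner_Integration.integral_cong refl)
    fix x :: real
    show "gamma_density m1 \<theta>1 x * measure (gamma_measure m0 \<theta>0) {gsr. \<not> R_sr Ps Pr Cx gsr x < r}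
      = 1 / (Gamma (real m1) * Gamma (real m0) * \<theta>1 ^ m1) *
        (indicator {0..} x *\<^sub>R (x ^ (m1 - 1) *
           upper_inc_Gamma m0 ((Pr * x + 1) / (Ps * \<theta>0) * Psi r (Pr * x * Cx / (Pr * x + 1)))
           * exp (- x / \<theta>1)))"
    proof (cases "x < 0")
      case False
      then show ?thesis
        using assms Gamma_real_pos[of "real m0"] Gamma_real_pos[of "real m1"]
        by (simp add: measure_gamma_measure_R_sr_not_less gamma_density_def field_simps)
    qed (simp add: gamma_density_def)
  qed
  finally show ?thesis .
qed

theorem lemma2:
  fixes M :: "'a measure"
    and g :: "nat \<Rightarrow> 'a \<Rightarrow> real"
    and m :: "nat \<Rightarrow> nat"
    and \<pi> :: "nat \<Rightarrow> real"
    and Ps Pr Cx r :: real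
  defines "\<theta> \<equiv> (\<lambda>i. \<pi> i / real (m i))"
  assumes "prob_space M"
    \<comment> \<open>indices: 0 = sr, 1 = rr, 2 = rd, 3 = sd\<close>
    and "prob_space.indep_vars M (\<lambda>_. borel) g {0, 1, 2, 3}"
    and "\<And>i. i \<in> {0, 1, 2, 3} \<Longrightarrow> m i \<ge> 1"
    and "\<And>i. i \<in> {0, 1, 2, 3} \<Longrightarrow> \<pi> i > 0"
    and "\<And>i. i \<in> {0, 1, 2, 3} \<Longrightarrow>
           distributed M lborel (g i) (\<lambda>x. ennreal (gamma_density (m i) (\<theta> i) x))"
    and "Ps > 0" and "Pr > 0" and "r > 0" and "0 \<le> Cx" and "Cx < 1"
  shows "measure M {\<omega> \<in> space M. R_sr Ps Pr Cx (g 0 \<omega>) (g 1 \<omega>) < r} =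
    1 - 1 / (Gamma (real (m 1)) * Gamma (real (m 0)) * \<theta> 1 ^ m 1) *
      (LBINT x:{0..}. x ^ (m 1 - 1) *
         upper_inc_Gamma (m 0) ((Pr * x + 1) / (Ps * \<theta> 0) * Psi r (Pr * x * Cx / (Pr * x + 1)))
         * exp (- x / \<theta> 1))"
proof -
  interpret prob_space M by fact
  have m: "m 0 \<ge> 1" "m 1 \<ge> 1" and \<theta>: "\<theta> 0 > 0" "\<theta> 1 > 0"
    using assms(4,5)[of 0] assms(4,5)[of 1] by (auto simp: \<theta>_def)
  have rv: "random_variable borel (g i)" and law: "distr M borel (g i) = gamma_measure (m i) (\<theta> i)"
    if "i \<in> {0, 1}" for i
    using assms(6)[of i] that by (auto simp: distributed_def gamma_measure_def cong: distr_cong)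
  have indep: "indep_var borel (g 1) borel (g 0)"
    using indep_var_of_indep_vars[OF assms(3), of 1 0] by simp
  define B where "B = {p :: real \<times> real. \<not> R_sr Ps Pr Cx (snd p) (fst p) < r}"
  have B: "B \<in> sets (borel \<Otimes>\<^sub>M borel)"
    unfolding B_def by (rule sets_R_sr_not_less)
  have "measure M {\<omega> \<in> space M. R_sr Ps Pr Cx (g 0 \<omega>) (g 1 \<omega>) < r}
      = 1 - prob {\<omega> \<in> space M. (g 1 \<omega>, g 0 \<omega>) \<in> B}"
    using rv[of 0] rv[of 1] unfolding B_def R_sr_def
    by (subst prob_compl[symmetric]) (measurable, auto intro!: arg_cong[where f=prob])
  also have "prob {\<omega> \<in> space M. (g 1 \<omega>, g 0 \<omega>) \<in> B}
      = (\<integral>grr. measure (gamma_measure (m 0) (\<theta> 0)) {gsr. \<not> R_sr Ps Pr Cx gsr grr < r} \<partial>gamma_measure (m 1) (\<theta> 1))"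
    using prob_indep_var_pair_eq_integral[OF indep B] law by (simp add: B_def vimage_def)
  also have "\<dots> = 1 / (Gamma (real (m 1)) * Gamma (real (m 0)) * \<theta> 1 ^ m 1) *
      (LBINT x:{0..}. x ^ (m 1 - 1) *
         upper_inc_Gamma (m 0) ((Pr * x + 1) / (Ps * \<theta> 0) * Psi r (Pr * x * Cx / (Pr * x + 1)))
         * exp (- x / \<theta> 1))"
    using m \<theta> assms(7-11) by (intro integral_gamma_measure_R_sr_not_less) simp_all
  finally show ?thesis .
qed

end
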